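(* Let $f=f(n)>0$ and suppose $f\in O(1/n)$. Then $$O\left(\frac{n^8f^2+n^2}{n^{15}f^7+n^3f^3}+\frac{n^{13}f^3+n^4}{n^{23}f^9+n^2f^2}+\sum_{k=3}^{n-1}\frac{k^3n^{12}(n-k)^3f^3+k^9n^6}{n^{16}(n-k)^9f^9+k^{16}(n-k)f}\right)\le O\left(\frac{\ln(n)}{nf}+\frac1{n^4f^4}\right).$$ Moreover, if $f\in o(1/n^3)$, then the left-hand side is $O\left(\frac1{nf^3}\right)$.
   Context: Asymptotic notation refers to $n\to\infty$. *)

theory Defs
  imports "HOL-Analysis.Analysis" "HOL-Library.Landau_Symbols"
begin

definition lhs17 :: "(nat \<Rightarrow> real) \<Rightarrow> nat \<Rightarrow> real" where
  "lhs17 f n =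
     (real n ^ 8 * f n ^ 2 + real n ^ 2) / (real n ^ 15 * f n ^ 7 + real n ^ 3 * f n ^ 3)
   + (real n ^ 13 * f n ^ 3 + real n ^ 4) / (real n ^ 23 * f n ^ 9 + real n ^ 2 * f n ^ 2)
   + (\<Sum>k = 3..n - 1.
        (real k ^ 3 * real n ^ 12 * (real n - real k) ^ 3 * f n ^ 3 + real k ^ 9 * real n ^ 6)
      / (real n ^ 16 * (real n - real k) ^ 9 * f n ^ 9 + real k ^ 16 * (real n - real k) * f n))"

end

theory Submission
  imports Defs
begin

text \<open>Write x = f n and u = n^3 x. Both isolated terms are 1/(n^4 x^4), and also 1/(n x^3),
times ratios (u^i + u^j) / (1 + u^k) with i, j \<le> k, so they are at most 4 min(1/(n^4 x^4), 1/(n x^3)).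
In the sum, split at k = n/2. For k \<le> n/2 we have n - k \<ge> n/2; keeping the first
denominator term is good for k \<le> K = sqrt(n^3 x) and keeping the second one for k > K, which gives
a bound c / (K n^4 x^4) min(1, K^2/k^2) whose sum over k is O(1/(n^4 x^4)); if n^3 x \<le> 1, the
second term alone decays like k^-2 and yields O(1/(n x^3)). For k > n/2 the summand is
O((n^2 x^2 + 1/(n x)) / (n - k)), so these terms sum to a harmonic sum, which produces the
logarithm. Finally n x = O(1) turns n^2 x^2 into O(1/(n x)), while n^3 x \<le> 1 turns every bound
into O(1/(n x^3)).\<close>

lemma power_le_one_add_power:
  fixes u :: real
  assumes "0 \<le> u" "i \<le> j"
  shows "u ^ i \<le> 1 + u ^ j"
proof (cases "u \<le> 1")
  case True
  then have "u ^ i \<le> 1" using assms by (simp add: power_le_one)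
  then show ?thesis using assms by (simp add: add_increasing2)
next
  case False
  then have "u ^ i \<le> u ^ j" using assms by (simp add: power_increasing)
  then show ?thesis by simp
qed

lemma add_powers_divide_one_add_power_le:
  fixes u :: real
  assumes "0 \<le> u" "i \<le> k" "j \<le> k"
  shows "(u ^ i + u ^ j) / (1 + u ^ k) \<le> 2"
proof -
  have "u ^ i + u ^ j \<le> 2 * (1 + u ^ k)"
    using power_le_one_add_power[of u i k] power_le_one_add_power[of u j k] assms by simp
  moreover have "0 < 1 + u ^ k" using assms by (simp add: add_pos_nonneg)
  ultimately show ?thesis by (simp add: pos_divide_le_eq)
qed

lemma power_mult_power_le_one:
  fixes n x :: real
  assumes "1 \<le> n" "0 \<le> x" "n ^ 3 * x \<le> 1" "a \<le> 3 * b"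
  shows "n ^ a * x ^ b \<le> 1"
proof -
  have "n ^ a * x ^ b \<le> n ^ (3 * b) * x ^ b"
    using assms by (intro mult_right_mono power_increasing) auto
  also have "\<dots> = (n ^ 3 * x) ^ b" by (simp add: power_mult power_mult_distrib)
  also have "\<dots> \<le> 1" using assms by (intro power_le_one) auto
  finally show ?thesis .
qed

lemma harm_le_one_add_ln: "0 < n \<Longrightarrow> (harm n :: real) \<le> 1 + ln (real n)"
  using euler_mascheroni_sequence_decreasing[of 1 n] by (simp add: harm_def)

lemma sum_inverse_square_tail_le:
  assumes "1 \<le> a"
  shows "(\<Sum>k=a..N. 1 / real k ^ 2) \<le> 2 / real a"
proof (cases "a \<le> N")
  case True
  have "(\<Sum>k=a..N. 1 / real k ^ 2) \<le> (\<Sum>k=a..N. 2 / real k - 2 / real (Suc k))"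
  proof (rule sum_mono)
    fix k assume "k \<in> {a..N}"
    then have k: "1 \<le> real k" using assms by simp
    have "1 / real k ^ 2 \<le> 2 / (real k * (real k + 1))"
      using k by (simp add: divide_simps power2_eq_square)
    also have "\<dots> = 2 / real k - 2 / real (Suc k)" using k by (simp add: field_simps)
    finally show "1 / real k ^ 2 \<le> 2 / real k - 2 / real (Suc k)" .
  qed
  also have "\<dots> = 2 / real a - 2 / real (Suc N)"
    using sum_Suc_diff[of a N "\<lambda>k. - 2 / real k"] True by simp
  also have "\<dots> \<le> 2 / real a" by simp
  finally show ?thesis .
qed (use assms in simp)

lemma sum_min_one_inverse_square_le:
  fixes K :: real
  assumes K: "0 < K"
  shows "(\<Sum>k=1..N. min 1 (K ^ 2 / real k ^ 2)) \<le> 3 * K"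
proof -
  define a where "a = nat \<lfloor>K\<rfloor> + 1"
  have a: "1 \<le> a" "K < real a" "real (a - 1) \<le> K" using K by (simp_all add: a_def) linarith+
  have "(\<Sum>k=1..N. min 1 (K ^ 2 / real k ^ 2)) \<le> (\<Sum>k\<in>{1..<a} \<union> {a..N}. min 1 (K ^ 2 / real k ^ 2))"
    by (intro sum_mono2) auto
  also have "\<dots> = (\<Sum>k=1..<a. min 1 (K ^ 2 / real k ^ 2)) + (\<Sum>k=a..N. min 1 (K ^ 2 / real k ^ 2))"
    by (intro sum.union_disjoint) auto
  also have "\<dots> \<le> (\<Sum>k=1..<a. 1) + (\<Sum>k=a..N. K ^ 2 * (1 / real k ^ 2))"
    by (intro add_mono sum_mono) auto
  also have "\<dots> = real (a - 1) + K ^ 2 * (\<Sum>k=a..N. 1 / real k ^ 2)"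
    by (simp add: sum_distrib_left)
  also have "\<dots> \<le> K + K ^ 2 * (2 / real a)"
    using a by (intro add_mono mult_left_mono sum_inverse_square_tail_le) auto
  also have "K ^ 2 * (2 / real a) \<le> 2 * K"
    using a K by (simp add: field_simps power2_eq_square)
  finally show ?thesis by simp
qed

lemma bigoI_nonneg:
  fixes f g :: "'a \<Rightarrow> real"
  assumes "0 \<le> c" and "eventually (\<lambda>x. 0 \<le> f x \<and> f x \<le> c * g x) F"
  shows "f \<in> O[F](g)"
  using assms(2)
  by (intro bigoI[where c = c], elim eventually_mono)
    (use assms(1) in \<open>auto intro: order_trans mult_left_mono abs_ge_self\<close>)

lemma lhs17_head_le:
  fixes n x :: real
  assumes n: "0 < n" and x: "0 < x"
  defines "H \<equiv> (n^8 * x^2 + n^2) / (n^15 * x^7 + n^3 * x^3)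
              + (n^13 * x^3 + n^4) / (n^23 * x^9 + n^2 * x^2)"
  shows "H \<le> 4 / (n^4 * x^4)" and "H \<le> 4 / (n * x^3)"
proof -
  define u where "u = n^3 * x"
  have u: "0 \<le> u" using n x by (simp add: u_def)
  have "0 < n^15 * x^7 + n^3 * x^3" "0 < n^23 * x^9 + n^2 * x^2"
    "0 < (1 + u^4) * (n^4 * x^4)" "0 < (1 + u^7) * (n^4 * x^4)"
    "0 < (1 + u^4) * (n * x^3)" "0 < (1 + u^7) * (n * x^3)"
    using n x u by (auto intro!: add_pos_pos add_pos_nonneg mult_pos_pos)
  then have ne: "n^15 * x^7 + n^3 * x^3 \<noteq> 0" "n^23 * x^9 + n^2 * x^2 \<noteq> 0"
    "(1 + u^4) * (n^4 * x^4) \<noteq> 0" "(1 + u^7) * (n^4 * x^4) \<noteq> 0"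
    "(1 + u^4) * (n * x^3) \<noteq> 0" "(1 + u^7) * (n * x^3) \<noteq> 0"
    by (metis less_irrefl)+
  have t1: "(n^8 * x^2 + n^2) / (n^15 * x^7 + n^3 * x^3) = (u^1 + u^3) / ((1 + u^4) * (n^4 * x^4))"
    by (rule frac_eq_eq[OF ne(1) ne(3), THEN iffD2]) (unfold u_def, algebra)
  have t2: "(n^13 * x^3 + n^4) / (n^23 * x^9 + n^2 * x^2) = (u^2 + u^5) / ((1 + u^7) * (n^4 * x^4))"
    by (rule frac_eq_eq[OF ne(2) ne(4), THEN iffD2]) (unfold u_def, algebra)
  have t3: "(n^8 * x^2 + n^2) / (n^15 * x^7 + n^3 * x^3) = (u^0 + u^2) / ((1 + u^4) * (n * x^3))"
    by (rule frac_eq_eq[OF ne(1) ne(5), THEN iffD2]) (unfold u_def, algebra)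
  have t4: "(n^13 * x^3 + n^4) / (n^23 * x^9 + n^2 * x^2) = (u^1 + u^4) / ((1 + u^7) * (n * x^3))"
    by (rule frac_eq_eq[OF ne(2) ne(6), THEN iffD2]) (unfold u_def, algebra)
  have "H = (u^1 + u^3) / ((1 + u^4) * (n^4 * x^4)) + (u^2 + u^5) / ((1 + u^7) * (n^4 * x^4))"
    unfolding H_def t1 t2 ..
  also have "\<dots> \<le> 2 / (n^4 * x^4) + 2 / (n^4 * x^4)"
    using u n x by (simp only: divide_divide_eq_left[symmetric])
      (intro divide_right_mono add_mono add_powers_divide_one_add_power_le; simp)
  finally show "H \<le> 4 / (n^4 * x^4)" by simp
  have "H = (u^0 + u^2) / ((1 + u^4) * (n * x^3)) + (u^1 + u^4) / ((1 + u^7) * (n * x^3))"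
    unfolding H_def t3 t4 ..
  also have "\<dots> \<le> 2 / (n * x^3) + 2 / (n * x^3)"
    using u n x by (simp only: divide_divide_eq_left[symmetric])
      (intro divide_right_mono add_mono add_powers_divide_one_add_power_le; simp)
  finally show "H \<le> 4 / (n * x^3)" by simp
qed

definition lhs17_summand :: "real \<Rightarrow> real \<Rightarrow> real \<Rightarrow> real" where
  "lhs17_summand x n k =
     (k^3 * n^12 * (n - k)^3 * x^3 + k^9 * n^6) / (n^16 * (n - k)^9 * x^9 + k^16 * (n - k) * x)"

lemma lhs17_summand_numerator_le:
  fixes n k x :: real
  assumes "0 \<le> k" "k \<le> n" "0 \<le> x"
  shows "k^3 * n^12 * (n - k)^3 * x^3 + k^9 * n^6 \<le> k^3 * n^15 * x^3 + k^9 * n^6"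
proof -
  have "k^3 * n^12 * (n - k)^3 * x^3 = k^3 * x^3 * (n^12 * (n - k)^3)" by algebra
  also have "\<dots> \<le> k^3 * x^3 * (n^12 * n^3)" using assms by (intro mult_left_mono power_mono) auto
  also have "\<dots> = k^3 * n^15 * x^3" by algebra
  finally show ?thesis by simp
qed

lemma lhs17_summand_le_small_k_powers:
  fixes n k x :: real
  assumes k: "1 \<le> k" and kn: "2 * k \<le> n" and x: "0 < x"
  shows "lhs17_summand x n k \<le> 512 * (k^3 / (n^10 * x^6) + k^9 / (n^19 * x^9))"
proof -
  have n: "0 < n" using k kn by simp
  have "lhs17_summand x n k \<le> (k^3 * n^15 * x^3 + k^9 * n^6) / (n^25 * x^9 / 512)"
    unfolding lhs17_summand_def
  proof (rule frac_le)
    have "n^9 \<le> (2 * (n - k))^9" using k kn by (intro power_mono) auto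
    also have "\<dots> = 512 * (n - k)^9" by (simp only: power_mult_distrib) simp
    finally have "n^9 / 512 \<le> (n - k)^9" by simp
    have "n^25 * x^9 / 512 = n^16 * x^9 * (n^9 / 512)" by (simp flip: power_add)
    also have "\<dots> \<le> n^16 * x^9 * (n - k)^9"
      using n x \<open>n^9 / 512 \<le> (n - k)^9\<close> by (intro mult_left_mono) auto
    also have "\<dots> \<le> n^16 * (n - k)^9 * x^9 + k^16 * (n - k) * x"
      using k kn x by (simp add: mult_ac)
    finally show "n^25 * x^9 / 512 \<le> n^16 * (n - k)^9 * x^9 + k^16 * (n - k) * x" .
  qed (use lhs17_summand_numerator_le[of k n x] n x k kn in auto)
  also have "\<dots> = 512 * (k^3 / (n^10 * x^6) + k^9 / (n^19 * x^9))"
    using n x by (simp add: field_simps)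
  finally show ?thesis .
qed

lemma lhs17_summand_le_small_k_inverse_powers:
  fixes n k x :: real
  assumes k: "1 \<le> k" and kn: "2 * k \<le> n" and x: "0 < x"
  shows "lhs17_summand x n k \<le> 2 * (n^14 * x^2 / k^13 + n^5 / (k^7 * x))"
proof -
  have n: "0 < n" using k kn by simp
  have "lhs17_summand x n k \<le> (k^3 * n^15 * x^3 + k^9 * n^6) / (k^16 * n * x / 2)"
    unfolding lhs17_summand_def
  proof (rule frac_le)
    have "k^16 * n * x / 2 \<le> k^16 * (n - k) * x" using k kn x by simp
    also have "\<dots> \<le> n^16 * (n - k)^9 * x^9 + k^16 * (n - k) * x" using k kn n x by simp
    finally show "k^16 * n * x / 2 \<le> n^16 * (n - k)^9 * x^9 + k^16 * (n - k) * x" .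
  qed (use lhs17_summand_numerator_le[of k n x] n x k kn in auto)
  also have "\<dots> = 2 * (n^14 * x^2 / k^13 + n^5 / (k^7 * x))"
    using n x k by (simp add: field_simps) algebra
  finally show ?thesis .
qed

lemma lhs17_summand_le_large_k:
  fixes n k x :: real
  assumes kn: "n < 2 * k" "k < n" and x: "0 < x"
  shows "lhs17_summand x n k \<le> (8192 * n^2 * x^2 + 128 / (n * x)) / (n - k)"
proof -
  define m where "m = n - k"
  have m: "0 < m" "m \<le> n" and k: "0 < k" "n \<le> 2 * k" and n: "0 < n"
    using kn by (simp_all add: m_def)
  have "k^3 * n^12 * m^3 * x^3 = k^3 * x^3 * (n^12 * m^3)" by algebra
  also have "\<dots> \<le> k^3 * x^3 * (n^12 * n^3)"
    using m k x by (intro mult_left_mono power_mono) auto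
  also have "\<dots> = k^3 * x^3 * (n^2 * n^13)" by (simp flip: power_add)
  also have "\<dots> \<le> k^3 * x^3 * (n^2 * (2 * k)^13)"
    using n k x by (intro mult_left_mono power_mono) auto
  also have "\<dots> = 8192 * n^2 * x^2 * (k^16 * x)" by algebra
  finally have "k^3 * n^12 * m^3 * x^3 \<le> 8192 * n^2 * x^2 * (k^16 * x)" .
  moreover have "k^9 * n^6 \<le> 128 / (n * x) * (k^16 * x)"
  proof -
    have "k^9 * n^6 * n = k^9 * n^7" by algebra
    also have "\<dots> \<le> k^9 * (2 * k)^7" using n k by (intro mult_left_mono power_mono) auto
    also have "\<dots> = 128 * k^16" by algebra
    finally show ?thesis using n x by (simp add: field_simps)
  qed
  ultimately have num: "k^3 * n^12 * m^3 * x^3 + k^9 * n^6 \<le> (8192 * n^2 * x^2 + 128 / (n * x)) * (k^16 * x)"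
    by (simp add: distrib_right)
  have "lhs17_summand x n k \<le> (k^3 * n^12 * m^3 * x^3 + k^9 * n^6) / (k^16 * m * x)"
    unfolding lhs17_summand_def m_def[symmetric]
    using m n k x by (intro divide_left_mono) (auto intro!: mult_pos_pos add_pos_pos)
  also have "\<dots> \<le> (8192 * n^2 * x^2 + 128 / (n * x)) * (k^16 * x) / (k^16 * m * x)"
    using m k x num by (intro divide_right_mono) auto
  also have "\<dots> = (8192 * n^2 * x^2 + 128 / (n * x)) / m" using k x by simp
  finally show ?thesis by (simp add: m_def)
qed

lemma lhs17_summand_le_min_one_square:
  fixes n k x K :: real
  assumes k: "1 \<le> k" and kn: "2 * k \<le> n" and x: "0 < x" and K: "0 < K" "K^2 = n^3 * x"
  shows "lhs17_summand x n k \<le> 1024 / (K * n^4 * x^4) * min 1 (K^2 / k^2)"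
proof -
  have n: "0 < n" using k kn by simp
  show ?thesis
  proof (cases "k \<le> K")
    case True
    have "lhs17_summand x n k \<le> 512 * (k^3 / (n^10 * x^6) + k^9 / (n^19 * x^9))"
      by (rule lhs17_summand_le_small_k_powers[OF k kn x])
    also have "\<dots> \<le> 512 * (K^3 / (n^10 * x^6) + K^9 / (n^19 * x^9))"
      using True k n x by (intro mult_left_mono add_mono divide_right_mono power_mono) auto
    also have "\<dots> = 1024 / (K * n^4 * x^4)"
      using n x K by (simp add: field_simps) (use K(2) in algebra)
    also have "\<dots> = 1024 / (K * n^4 * x^4) * min 1 (K^2 / k^2)"
      using True k by (simp add: min_def power_mono)
    finally show ?thesis .
  next
    case False
    have "lhs17_summand x n k \<le> 2 * (n^14 * x^2 / k^13 + n^5 / (k^7 * x))"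
      by (rule lhs17_summand_le_small_k_inverse_powers[OF k kn x])
    also have "\<dots> \<le> 2 * (n^14 * x^2 / (K^11 * k^2) + n^5 / (K^5 * k^2 * x))"
    proof -
      have "K^11 * k^2 \<le> k^11 * k^2" "K^5 * k^2 \<le> k^5 * k^2"
        using False K by (intro mult_right_mono power_mono; simp)+
      then have "K^11 * k^2 \<le> k^13" "K^5 * k^2 \<le> k^7" by (simp_all flip: power_add)
      then show ?thesis
        using K k x n by (intro mult_left_mono add_mono divide_left_mono mult_right_mono) auto
    qed
    also have "\<dots> = 4 / (K * n^4 * x^4) * (K^2 / k^2)"
      using n x K k by (simp add: field_simps) (use K(2) in algebra)
    also have "\<dots> \<le> 1024 / (K * n^4 * x^4) * min 1 (K^2 / k^2)"
    proof -
      have "K^2 \<le> k^2" using False K by (intro power_mono) auto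
      then have "min 1 (K^2 / k^2) = K^2 / k^2" using k by simp
      moreover have "4 / (K * n^4 * x^4) \<le> 1024 / (K * n^4 * x^4)"
        using K n x by (intro divide_right_mono) auto
      ultimately show ?thesis by (metis mult_right_mono divide_nonneg_nonneg zero_le_power2)
    qed
    finally show ?thesis .
  qed
qed

lemma sum_lhs17_summand_small_k_le:
  fixes n :: nat and x :: real
  assumes n: "0 < n" and x: "0 < x"
  shows "(\<Sum>k\<in>{k\<in>{3..n-1}. 2 * k \<le> n}. lhs17_summand x (real n) (real k)) \<le> 3072 / (real n ^ 4 * x ^ 4)"
proof -
  define K where "K = sqrt (real n ^ 3 * x)"
  have K: "0 < K" "K^2 = real n ^ 3 * x" using n x by (simp_all add: K_def)
  define c where "c = 1024 / (K * real n ^ 4 * x ^ 4)"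
  have c: "0 \<le> c" using K x by (simp add: c_def)
  have "(\<Sum>k\<in>{k\<in>{3..n-1}. 2 * k \<le> n}. lhs17_summand x (real n) (real k))
      \<le> (\<Sum>k\<in>{k\<in>{3..n-1}. 2 * k \<le> n}. c * min 1 (K^2 / real k ^ 2))"
    unfolding c_def using x K by (intro sum_mono lhs17_summand_le_min_one_square) auto
  also have "\<dots> \<le> (\<Sum>k=1..n. c * min 1 (K^2 / real k ^ 2))"
    using c by (intro sum_mono2) auto
  also have "\<dots> = c * (\<Sum>k=1..n. min 1 (K^2 / real k ^ 2))"
    by (simp add: sum_distrib_left)
  also have "\<dots> \<le> c * (3 * K)"
    using c K by (intro mult_left_mono sum_min_one_inverse_square_le) auto
  also have "\<dots> = 3072 / (real n ^ 4 * x ^ 4)"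
    using K by (simp add: c_def)
  finally show ?thesis .
qed

lemma sum_lhs17_summand_small_k_le_of_cube_le:
  fixes n :: nat and x :: real
  assumes n: "0 < n" and x: "0 < x" and u: "real n ^ 3 * x \<le> 1"
  shows "(\<Sum>k\<in>{k\<in>{3..n-1}. 2 * k \<le> n}. lhs17_summand x (real n) (real k)) \<le> 4 / (real n * x ^ 3)"
proof -
  define Q where "Q = 1 / (real n * x ^ 3)"
  have Q: "0 \<le> Q" using x by (simp add: Q_def)
  have n1: "1 \<le> real n" using n by simp
  have le_Q: "y \<le> Q" if "y * (real n * x ^ 3) \<le> 1" for y
    using that n x by (simp add: Q_def le_divide_eq mult_pos_pos)
  have "real n ^ 14 * x^2 * (real n * x ^ 3) = real n ^ 15 * x ^ 5" by algebra
  then have "real n ^ 14 * x^2 \<le> Q"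
    using power_mult_power_le_one[OF n1 _ u, of 15 5] x by (intro le_Q) simp
  have "real n ^ 5 / x * (real n * x ^ 3) = real n ^ 6 * x ^ 2"
    using x by (simp add: field_simps power2_eq_square) algebra
  then have "real n ^ 5 / x \<le> Q"
    using power_mult_power_le_one[OF n1 _ u, of 6 2] x by (intro le_Q) simp
  have summand_le: "lhs17_summand x n k \<le> 4 * Q * (1 / real k ^ 2)"
    if "k \<in> {k\<in>{3..n-1}. 2 * k \<le> n}" for k
  proof -
    have k: "1 \<le> real k" "2 * real k \<le> real n" using that by auto
    have "lhs17_summand x n k \<le> 2 * (real n ^ 14 * x^2 / real k ^ 13 + real n ^ 5 / (real k ^ 7 * x))"
      by (rule lhs17_summand_le_small_k_inverse_powers[OF k x])
    also have "\<dots> \<le> 2 * (real n ^ 14 * x^2 / real k ^ 2 + real n ^ 5 / (real k ^ 2 * x))"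
      using k x by (intro mult_left_mono add_mono divide_left_mono mult_right_mono power_increasing) auto
    also have "\<dots> = 2 * (real n ^ 14 * x^2 + real n ^ 5 / x) * (1 / real k ^ 2)"
      using k x by (simp add: field_simps)
    also have "\<dots> \<le> 4 * Q * (1 / real k ^ 2)"
      using \<open>real n ^ 14 * x^2 \<le> Q\<close> \<open>real n ^ 5 / x \<le> Q\<close> by (intro mult_right_mono) auto
    finally show ?thesis .
  qed
  have "(\<Sum>k\<in>{k\<in>{3..n-1}. 2 * k \<le> n}. lhs17_summand x (real n) (real k))
      \<le> (\<Sum>k\<in>{k\<in>{3..n-1}. 2 * k \<le> n}. 4 * Q * (1 / real k ^ 2))"
    using summand_le by (rule sum_mono)
  also have "\<dots> \<le> (\<Sum>k=3..n. 4 * Q * (1 / real k ^ 2))"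
    using Q by (intro sum_mono2) auto
  also have "\<dots> = 4 * Q * (\<Sum>k=3..n. 1 / real k ^ 2)"
    by (simp add: sum_distrib_left)
  also have "\<dots> \<le> 4 * Q * 1"
    using sum_inverse_square_tail_le[of 3 n] Q by (intro mult_left_mono) auto
  finally show ?thesis by (simp add: Q_def)
qed

lemma sum_lhs17_summand_large_k_le:
  fixes n :: nat and x :: real
  assumes n: "0 < n" and x: "0 < x"
  shows "(\<Sum>k\<in>{k\<in>{3..n-1}. n < 2 * k}. lhs17_summand x (real n) (real k))
    \<le> (8192 * real n ^ 2 * x ^ 2 + 128 / (real n * x)) * (1 + ln (real n))"
proof -
  define c where "c = 8192 * real n ^ 2 * x ^ 2 + 128 / (real n * x)"
  define S where "S = {k\<in>{3..n-1}. n < 2 * k}"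
  have c: "0 \<le> c" using x by (simp add: c_def)
  have reindex: "(\<Sum>k\<in>S. 1 / real (n - k)) = (\<Sum>j\<in>(\<lambda>k. n - k) ` S. 1 / real j)"
    by (rule sum.reindex[symmetric, unfolded comp_def]) (auto simp: inj_on_def S_def)
  have "(\<Sum>k\<in>S. lhs17_summand x (real n) (real k)) \<le> (\<Sum>k\<in>S. c * (1 / real (n - k)))"
  proof (rule sum_mono)
    fix k assume "k \<in> S"
    then have k: "real n < 2 * real k" "real k < real n" "k \<le> n" by (auto simp: S_def)
    show "lhs17_summand x n k \<le> c * (1 / real (n - k))"
      using lhs17_summand_le_large_k[OF k(1,2) x] k(3) by (simp add: c_def of_nat_diff)
  qed
  also have "\<dots> = c * (\<Sum>j\<in>(\<lambda>k. n - k) ` S. 1 / real j)"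
    unfolding reindex[symmetric] by (rule sum_distrib_left[symmetric])
  also have "\<dots> \<le> c * harm n"
    unfolding harm_def inverse_eq_divide
    using c by (intro mult_left_mono sum_mono2) (auto simp: S_def)
  also have "\<dots> \<le> c * (1 + ln (real n))"
    using c n by (intro mult_left_mono harm_le_one_add_ln) auto
  finally show ?thesis by (simp add: S_def c_def)
qed

lemma sum_lhs17_summand_large_k_le_of_mult_le:
  fixes n :: nat and x C :: real
  assumes n: "3 \<le> n" and x: "0 < x" and C: "real n * x \<le> C"
  shows "(\<Sum>k\<in>{k\<in>{3..n-1}. n < 2 * k}. lhs17_summand x (real n) (real k))
    \<le> (16384 * C^3 + 256) * (ln (real n) / (real n * x))"
proof -
  have n0: "0 < real n" using n by simp
  have ln_n: "1 \<le> ln (real n)"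
  proof -
    have "exp 1 \<le> real n" using exp_le n by linarith
    then show ?thesis using ln_le_cancel_iff[of "exp 1" "real n"] n by simp
  qed
  have "real n ^ 2 * x ^ 2 \<le> C^3 / (real n * x)"
  proof -
    have "real n ^ 2 * x ^ 2 * (real n * x) = (real n * x) ^ 3" by algebra
    also have "\<dots> \<le> C ^ 3" using C x n0 by (intro power_mono) auto
    finally show ?thesis using x n0 by (simp add: pos_le_divide_eq)
  qed
  then have "8192 * real n ^ 2 * x ^ 2 + 128 / (real n * x)
      \<le> 8192 * (C^3 / (real n * x)) + 128 / (real n * x)" by simp
  moreover have "0 \<le> C" using C mult_pos_pos[OF n0 x] by simp
  ultimately have "(8192 * real n ^ 2 * x ^ 2 + 128 / (real n * x)) * (1 + ln (real n))
      \<le> (8192 * (C^3 / (real n * x)) + 128 / (real n * x)) * (2 * ln (real n))"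
    using ln_n x n0 by (intro mult_mono) auto
  also have "\<dots> = (16384 * C^3 + 256) * (ln (real n) / (real n * x))"
    using x n0 by (simp add: field_simps)
  finally show ?thesis using sum_lhs17_summand_large_k_le[of n x] n x by simp
qed

lemma sum_lhs17_summand_large_k_le_of_cube_le:
  fixes n :: nat and x :: real
  assumes n: "0 < n" and x: "0 < x" and u: "real n ^ 3 * x \<le> 1"
  shows "(\<Sum>k\<in>{k\<in>{3..n-1}. n < 2 * k}. lhs17_summand x (real n) (real k))
    \<le> 8320 / (real n * x ^ 3)"
proof -
  define Q where "Q = 1 / (real n * x ^ 3)"
  have n1: "1 \<le> real n" using n by simp
  have le_Q: "y \<le> Q" if "y * (real n * x ^ 3) \<le> 1" for y
    using that n x by (simp add: Q_def le_divide_eq mult_pos_pos)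
  have "real n ^ 3 * x ^ 2 * (real n * x ^ 3) = real n ^ 4 * x ^ 5" by algebra
  then have "real n ^ 3 * x ^ 2 \<le> Q"
    using power_mult_power_le_one[OF n1 _ u, of 4 5] x by (intro le_Q) simp
  have "1 / x * (real n * x ^ 3) = real n * x ^ 2"
    using x by (simp add: power2_eq_square power3_eq_cube)
  then have "1 / x \<le> Q"
    using power_mult_power_le_one[OF n1 _ u, of 1 2] x by (intro le_Q) simp
  have "1 + ln (real n) \<le> real n" using ln_le_minus_one[of "real n"] n1 by simp
  then have "(8192 * real n ^ 2 * x ^ 2 + 128 / (real n * x)) * (1 + ln (real n))
      \<le> (8192 * real n ^ 2 * x ^ 2 + 128 / (real n * x)) * real n"
    using x n1 by (intro mult_left_mono) auto
  also have "\<dots> = 8192 * (real n ^ 3 * x ^ 2) + 128 * (1 / x)"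
    using x n1 by (simp add: field_simps power2_eq_square power3_eq_cube)
  also have "\<dots> \<le> 8320 * Q"
    using \<open>real n ^ 3 * x ^ 2 \<le> Q\<close> \<open>1 / x \<le> Q\<close> by linarith
  finally show ?thesis using sum_lhs17_summand_large_k_le[of n x] n x by (simp add: Q_def)
qed

lemma lhs17_eq_head_add_sums:
  fixes f :: "nat \<Rightarrow> real" and n :: nat
  shows "lhs17 f n =
     ((real n ^ 8 * f n ^ 2 + real n ^ 2) / (real n ^ 15 * f n ^ 7 + real n ^ 3 * f n ^ 3)
      + (real n ^ 13 * f n ^ 3 + real n ^ 4) / (real n ^ 23 * f n ^ 9 + real n ^ 2 * f n ^ 2))
   + (\<Sum>k\<in>{k\<in>{3..n-1}. 2 * k \<le> n}. lhs17_summand (f n) (real n) (real k))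
   + (\<Sum>k\<in>{k\<in>{3..n-1}. n < 2 * k}. lhs17_summand (f n) (real n) (real k))"
proof -
  have "{3..n-1} = {k\<in>{3..n-1}. 2 * k \<le> n} \<union> {k\<in>{3..n-1}. n < 2 * k}" by auto
  then have "(\<Sum>k=3..n-1. lhs17_summand (f n) (real n) (real k))
      = (\<Sum>k\<in>{k\<in>{3..n-1}. 2 * k \<le> n}. lhs17_summand (f n) (real n) (real k))
      + (\<Sum>k\<in>{k\<in>{3..n-1}. n < 2 * k}. lhs17_summand (f n) (real n) (real k))"
    by (metis (no_types, lifting) sum.union_disjoint finite_atLeastAtMost finite_Un
        disjoint_iff mem_Collect_eq not_less)
  then show ?thesis unfolding lhs17_def lhs17_summand_def by (simp add: add.assoc)
qed

lemma lhs17_nonneg: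
  assumes "0 < f n"
  shows "0 \<le> lhs17 f n"
  unfolding lhs17_def using assms
  by (intro add_nonneg_nonneg sum_nonneg divide_nonneg_nonneg mult_nonneg_nonneg zero_le_power) auto

lemma lhs17_le_of_mult_le:
  fixes f :: "nat \<Rightarrow> real"
  assumes n: "3 \<le> n" and x: "0 < f n" and C: "real n * f n \<le> C"
  shows "lhs17 f n \<le> (3332 + 16384 * C^3) * (ln (real n) / (real n * f n) + 1 / (real n ^ 4 * f n ^ 4))"
proof -
  define L where "L = ln (real n) / (real n * f n)"
  define P where "P = 1 / (real n ^ 4 * f n ^ 4)"
  have n0: "0 < real n" using n by simp
  have "0 \<le> C" using C mult_pos_pos[OF n0 x] by simp
  have "0 \<le> L" "0 \<le> P" using n x by (simp_all add: L_def P_def)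
  have "lhs17 f n \<le> 4 * P + 3072 * P + (16384 * C^3 + 256) * L"
    unfolding lhs17_eq_head_add_sums L_def P_def
    using lhs17_head_le(1)[OF n0 x] sum_lhs17_summand_small_k_le[of n "f n"]
      sum_lhs17_summand_large_k_le_of_mult_le[OF n x C] n x
    by (intro add_mono) simp_all
  also have "\<dots> \<le> (3332 + 16384 * C^3) * (L + P)"
    using \<open>0 \<le> C\<close> \<open>0 \<le> L\<close> \<open>0 \<le> P\<close> by (simp add: algebra_simps)
  finally show ?thesis by (simp add: L_def P_def)
qed

lemma lhs17_le_of_cube_le:
  fixes f :: "nat \<Rightarrow> real"
  assumes n: "1 \<le> n" and x: "0 < f n" and u: "real n ^ 3 * f n \<le> 1"
  shows "lhs17 f n \<le> 8328 / (real n * f n ^ 3)"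
proof -
  have "lhs17 f n \<le> 4 / (real n * f n ^ 3) + 4 / (real n * f n ^ 3) + 8320 / (real n * f n ^ 3)"
    unfolding lhs17_eq_head_add_sums
    using lhs17_head_le(2)[of "real n" "f n"] sum_lhs17_summand_small_k_le_of_cube_le[of n "f n"]
      sum_lhs17_summand_large_k_le_of_cube_le[of n "f n"] n x u
    by (intro add_mono) simp_all
  then show ?thesis by simp
qed

theorem lemma17:
  fixes f :: "nat \<Rightarrow> real"
  assumes pos: "\<And>n. f n > 0"
    and fO: "f \<in> O[at_top](\<lambda>n. 1 / real n)"
  shows "lhs17 f \<in> O[at_top](\<lambda>n. ln (real n) / (real n * f n) + 1 / (real n ^ 4 * f n ^ 4))
         \<and> (f \<in> o[at_top](\<lambda>n. 1 / real n ^ 3) \<longrightarrow>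
            lhs17 f \<in> O[at_top](\<lambda>n. 1 / (real n * f n ^ 3)))"
proof (intro conjI impI)
  obtain C where C: "0 < C" "eventually (\<lambda>n. norm (f n) \<le> C * norm (1 / real n)) at_top"
    using fO by (elim landau_o.bigE)
  from C(2) eventually_ge_at_top[of 3] have "eventually (\<lambda>n. 0 \<le> lhs17 f n \<and> lhs17 f n
      \<le> (3332 + 16384 * C^3) * (ln (real n) / (real n * f n) + 1 / (real n ^ 4 * f n ^ 4))) at_top"
  proof eventually_elim
    case (elim n)
    then have "real n * f n \<le> C" using pos[of n] by (simp add: field_simps)
    then show ?case using elim pos lhs17_le_of_mult_le lhs17_nonneg by blast
  qed
  then show "lhs17 f \<in> O[at_top](\<lambda>n. ln (real n) / (real n * f n) + 1 / (real n ^ 4 * f n ^ 4))"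
    using C(1) by (intro bigoI_nonneg) auto
next
  assume "f \<in> o[at_top](\<lambda>n. 1 / real n ^ 3)"
  then have "eventually (\<lambda>n. norm (f n) \<le> 1 * norm (1 / real n ^ 3)) at_top"
    by (rule landau_o.smallD) simp
  from this eventually_ge_at_top[of 1] have "eventually (\<lambda>n. 0 \<le> lhs17 f n \<and> lhs17 f n
      \<le> 8328 * (1 / (real n * f n ^ 3))) at_top"
  proof eventually_elim
    case (elim n)
    then have "real n ^ 3 * f n \<le> 1" using pos[of n] by (simp add: field_simps)
    then show ?case using elim pos lhs17_le_of_cube_le lhs17_nonneg by simp
  qed
  then show "lhs17 f \<in> O[at_top](\<lambda>n. 1 / (real n * f n ^ 3))"
    by (intro bigoI_nonneg) auto
qed

end
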